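(* Let $\lambda>0$ and $0<\nu\le1$. The solution $u_\nu$ of $\frac{\partial^{\nu}u}{\partial t^{\nu}}=\lambda^2\frac{\partial^2u}{\partial x^2}$, $x\in\mathbb{R}$, $t>0$, $u(x,0)=\delta(x)$, satisfies, for $x\neq0$, \[ u_\nu(x,t)=\frac1\nu\,\frac{\lambda^{2/\nu}t}{|x|^{2/\nu+1}}\,p_{\nu/2}\!\left(\frac{\lambda^{2/\nu}t}{|x|^{2/\nu}};\frac\nu2,1\right)=\frac{1}{\nu|x|^{2/\nu+1}}\,p_{\nu/2}\!\left(\frac{1}{|x|^{2/\nu}};\frac\nu2,\frac{1}{\lambda t^{\nu/2}}\right). \]
   Context: Fractional derivative in the Dzherbashyan–Caputo sense: $\frac{\partial^{\nu}u}{\partial t^{\nu}}(x,t)=\frac{1}{\Gamma(1-\nu)}\int_0^t (t-s)^{-\nu}\frac{\partial u}{\partial s}(x,s)\,ds$ for $0<\nu<1$, ordinary derivative for $\nu=1$. The solution is $u_\nu(x,t)=\frac{1}{2\lambda t^{\nu/2}}\sum_{k\ge0}\frac{(-|x|/(\lambda t^{\nu/2}))^k}{k!\,\Gamma(-\nu k/2+1-\nu/2)}$. For $\alpha\neq1$, the stable density is $p_\alpha(x;\gamma,\eta)=\frac{1}{2\pi}\int_{-\infty}^{+\infty}e^{-i\beta x}\exp\{-\eta|\beta|^\alpha e^{-i\frac{\pi\gamma}{2}\frac{\beta}{|\beta|}}\}\,d\beta$. *)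

theory Defs
  imports "HOL-Analysis.Analysis"
begin

text \<open>Series solution of the time-fractional diffusion equation
  with initial datum delta (Dzherbashyan-Caputo derivative of order nu).
  The reciprocal Gamma function rGamma is used, so 1/Gamma at poles is 0.\<close>
definition u_nu :: "real \<Rightarrow> real \<Rightarrow> real \<Rightarrow> real \<Rightarrow> real" where
  "u_nu nu lam x t =
     1 / (2 * lam * t powr (nu/2)) *
     (\<Sum>k. (- \<bar>x\<bar> / (lam * t powr (nu/2))) ^ k / fact k
            * rGamma (- nu * real k / 2 + 1 - nu / 2))"

text \<open>Stable density p_alpha(x; gamma, eta), given by its Fourier inversion
  integral (sgn b plays the role of b/|b|; the value at b = 0 is irrelevant).\<close>
definition p_stable :: "real \<Rightarrow> real \<Rightarrow> real \<Rightarrow> real \<Rightarrow> complex" where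
  "p_stable alpha gam eta x =
     1 / (2 * complex_of_real pi) *
     integral UNIV (\<lambda>b::real.
        exp (- \<i> * complex_of_real (b * x)) *
        exp (- complex_of_real (eta * \<bar>b\<bar> powr alpha) *
             exp (- \<i> * complex_of_real (pi * gam / 2 * sgn b))))"

end

theory Submission
  imports Defs "HOL-Complex_Analysis.Complex_Analysis"
begin

text \<open>
  On \<open>b \<ge> 0\<close> the Fourier integrand of the stable density \<open>p_stable a a e y\<close> is
  \<open>exp (- i y b) exp (- e b\<^sup>a w)\<close> with \<open>w = exp (- i pi a / 2)\<close>, and on \<open>b \<le> 0\<close> it is the
  complex conjugate, so the density is \<open>Re \<Phi> (i y) / pi\<close> for the one-sided Laplace transform
  \<open>\<Phi> z = \<integral>\<^sub>0\<^sup>\<infinity> exp (- z b) exp (- e b\<^sup>a w) db\<close>. For real \<open>z > 0\<close>, expanding the second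
  exponential and integrating termwise (legitimate because \<open>a < 1\<close>) gives
  \<open>\<Phi> z = \<Sum>\<^sub>k (- e w)\<^sup>k Gamma (a k + 1) / k! * z powr (- (a k + 1))\<close>. Both sides are holomorphic
  in the right half-plane and continuous up to the imaginary axis, so the expansion survives at
  \<open>z = i y\<close>. By Euler's reflection formula, \<open>Re \<Phi> (i y) / pi = (a Z / y) M\<^sub>a Z\<close> with
  \<open>Z = e * y powr (- a)\<close> and \<open>M\<^sub>a\<close> the Mainardi function, of which the series for \<open>u\<^sub>\<nu>\<close> is a
  rescaling; the two claimed identities are two choices of \<open>(e, y)\<close> with the same \<open>Z\<close>.
\<close>

subsection \<open>Integrals over a half-line\<close>

lemma integrable_on_continuous_dominated:
  fixes f :: "'a::euclidean_space \<Rightarrow> 'b::euclidean_space"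
  assumes "continuous_on S f" "S \<in> sets lebesgue" "g integrable_on S"
    and "\<And>x. x \<in> S \<Longrightarrow> norm (f x) \<le> g x"
  shows "f integrable_on S"
  by (rule measurable_bounded_by_integrable_imp_integrable[OF continuous_imp_measurable_on_sets_lebesgue])
     (use assms in auto)

lemma tendsto_integral_atLeastAtMost_nat:
  fixes f :: "real \<Rightarrow> 'b::banach"
  assumes "f integrable_on {0..}"
  shows "(\<lambda>n. integral {0..real n} f) \<longlonglongrightarrow> integral {0..} f"
proof (rule LIMSEQ_I)
  fix \<epsilon> :: real assume "\<epsilon> > 0"
  moreover have "(f has_integral integral {0..} f) {0..}"
    using assms by (rule integrable_integral)
  ultimately obtain B where "B > 0" and B: "\<And>u v. ball 0 B \<subseteq> cbox u v \<Longrightarrow>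
      norm (integral (cbox u v) (\<lambda>x. if x \<in> {0..} then f x else 0) - integral {0..} f) < \<epsilon>"
    unfolding has_integral_alt'[of f _ "{0..}"] by blast
  obtain N :: nat where "B \<le> real N" using real_arch_simple by blast
  show "\<exists>N. \<forall>n\<ge>N. norm (integral {0..real n} f - integral {0..} f) < \<epsilon>"
  proof (intro exI allI impI)
    fix n assume "n \<ge> N"
    with \<open>B \<le> real N\<close> have "ball 0 B \<subseteq> cbox (- real n) (real n)"
      by (auto simp: dist_real_def)
    moreover have "{0..} \<inter> cbox (- real n) (real n) = {0..real n}"
      by auto
    then have "integral (cbox (- real n) (real n)) (\<lambda>x. if x \<in> {0..} then f x else 0)
                 = integral {0..real n} f"
      using integral_restrict_Int[of "cbox (- real n) (real n)" "{0..}" f] by (simp only:)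
    ultimately show "norm (integral {0..real n} f - integral {0..} f) < \<epsilon>"
      using B by metis
  qed
qed

lemma has_integral_tail:
  fixes f :: "real \<Rightarrow> 'b::banach"
  assumes "f integrable_on {0..}"
  shows "((\<lambda>b. if b \<in> {0..c} then 0 else f b) has_integral (integral {0..} f - integral {0..c} f)) {0..}"
proof -
  have "f integrable_on {0..c}"
    by (rule integrable_on_subinterval[OF assms]) auto
  then have "((\<lambda>b. if b \<in> {0..c} then f b else 0) has_integral integral {0..c} f) {0..}"
    by (subst has_integral_restrict) (auto simp: has_integral_integral)
  from has_integral_diff[OF integrable_integral[OF assms] this]
  show ?thesis
    by (rule has_integral_eq[rotated]) auto
qed

lemma norm_integral_tail_le:
  fixes f :: "real \<Rightarrow> 'b::banach"
  assumes "f integrable_on {0..}" "g integrable_on {0..}" "\<And>b. 0 \<le> b \<Longrightarrow> norm (f b) \<le> g b"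
  shows "norm (integral {0..} f - integral {0..c} f) \<le> integral {0..} g - integral {0..c} g"
proof -
  note tail_f = has_integral_tail[OF assms(1), of c] and tail_g = has_integral_tail[OF assms(2), of c]
  have "norm (integral {0..} (\<lambda>b. if b \<in> {0..c} then 0 else f b))
          \<le> integral {0..} (\<lambda>b. if b \<in> {0..c} then 0 else g b)"
    by (rule integral_norm_bound_integral[OF has_integral_integrable[OF tail_f] has_integral_integrable[OF tail_g]])
       (use assms(3) in auto)
  then show ?thesis
    using integral_unique[OF tail_f] integral_unique[OF tail_g] by simp
qed

lemma has_integral_reflect_set:
  fixes f :: "real \<Rightarrow> 'b::banach"
  assumes "(f has_integral i) S"
  shows "((\<lambda>x. f (-x)) has_integral i) (uminus ` S)"
proof -
  define g where "g = (\<lambda>x. if x \<in> S then f x else 0)"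
  have eq: "(\<lambda>x. if x \<in> uminus ` S then f (-x) else 0) = (\<lambda>x. g (-x))"
    by (auto simp: g_def fun_eq_iff image_iff)
  from assms have g_int: "\<And>u v. g integrable_on cbox u v"
    and g_lim: "\<And>e. e > 0 \<Longrightarrow>
                  \<exists>B>0. \<forall>u v. ball 0 B \<subseteq> cbox u v \<longrightarrow> norm (integral (cbox u v) g - i) < e"
    unfolding has_integral_alt'[of f i S] g_def by blast+
  have reflect: "((\<lambda>x. g (-x)) has_integral integral {-v..-u} g) {u..v}" for u v :: real
    using has_integral_reflect_real[where f=g and a="-v" and b="-u"] g_int[of "-v" "-u"]
    by (simp add: has_integral_integral)
  show ?thesis
    unfolding has_integral_alt'[of _ i] eq
  proof (intro conjI allI impI)
    fix u v :: real
    show "(\<lambda>x. g (-x)) integrable_on cbox u v"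
      using reflect by auto
  next
    fix e :: real assume "e > 0"
    then obtain B where "B > 0" and B: "\<And>u v. ball 0 B \<subseteq> cbox u v \<Longrightarrow> norm (integral (cbox u v) g - i) < e"
      using g_lim by blast
    have "norm (integral (cbox u v) (\<lambda>x. g (-x)) - i) < e" if "ball 0 B \<subseteq> cbox u v" for u v :: real
    proof -
      have "ball 0 B \<subseteq> cbox (-v) (-u)"
      proof
        fix x :: real assume "x \<in> ball 0 B"
        then have "-x \<in> ball 0 B" by (simp add: dist_norm)
        then have "-x \<in> cbox u v" using that by blast
        then show "x \<in> cbox (-v) (-u)" by auto
      qed
      then show ?thesis
        using B[of "-v" "-u"] integral_unique[OF reflect[where u=u and v=v]] by simp
    qed
    with \<open>B > 0\<close> show "\<exists>B>0. \<forall>u v. ball 0 B \<subseteq> cbox u v \<longrightarrow>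
                                   norm (integral (cbox u v) (\<lambda>x. g (-x)) - i) < e"
      by blast
  qed
qed

lemma exp_neg_powr_le_inverse_square:
  assumes "k > 0" "a > 0" "(b::real) > 0"
  shows "exp (- k * b powr a) \<le> exp (4 / (a^2 * k)) * b powr (-2)"
proof -
  define u where "u = b powr (a/2)"
  have "u > 0" and "u * u = b powr a"
    using assms by (simp_all add: u_def flip: powr_add)
  have "ln b = (2/a) * ln u"
    using assms by (simp add: u_def ln_powr)
  also have "\<dots> \<le> (2/a) * u"
    using \<open>u > 0\<close> \<open>a > 0\<close> ln_le_minus_one[of u] by (intro mult_left_mono) auto
  finally have "2 * ln b \<le> (4/a) * u" by simp
  moreover have "(4/a) * u \<le> k * (u * u) + 4 / (a^2 * k)"
  proof -
    have "0 \<le> k * (u - 2 / (a * k))^2" using \<open>k > 0\<close> by simp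
    also have "\<dots> = k * (u * u) - (4/a) * u + 4 / (a^2 * k)"
      using assms by (simp add: power2_eq_square field_simps)
    finally show ?thesis by simp
  qed
  ultimately have "- k * b powr a \<le> 4 / (a^2 * k) - 2 * ln b"
    using \<open>u * u = b powr a\<close> by simp
  then have "exp (- k * b powr a) \<le> exp (4 / (a^2 * k) - 2 * ln b)"
    by simp
  also have "\<dots> = exp (4 / (a^2 * k)) * b powr (-2)"
    unfolding exp_diff powr_minus_divide using assms by (simp add: powr_def)
  finally show ?thesis .
qed

lemma exp_neg_powr_integrable:
  assumes "(k::real) > 0" "a > 0"
  shows "(\<lambda>b. exp (- k * b powr a)) integrable_on {0..}"
proof -
  have cont: "continuous_on {0..} (\<lambda>b::real. exp (- k * b powr a))"
    using assms by (intro continuous_intros continuous_on_powr') auto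
  have "(\<lambda>b::real. b powr (-2)) integrable_on {1..}"
    using has_integral_powr_to_inf[of "-2" 1] by (auto simp: integrable_on_def)
  from integrable_cmul[OF this, of "exp (4 / (a^2 * k))"]
  have dominant: "(\<lambda>b::real. exp (4 / (a^2 * k)) * b powr (-2)) integrable_on {1..}"
    by simp
  have tail: "(\<lambda>b. exp (- k * b powr a)) integrable_on {1..}"
    by (rule integrable_on_continuous_dominated[OF continuous_on_subset[OF cont] _ dominant])
       (use exp_neg_powr_le_inverse_square[OF assms] in auto)
  have head: "(\<lambda>b. exp (- k * b powr a)) integrable_on {0..1}"
    by (rule integrable_continuous_interval) (rule continuous_on_subset[OF cont], auto)
  have "negligible ({0..1} \<inter> {1::real..})"
    by (rule negligible_subset[OF negligible_sing[of 1]]) auto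
  moreover have "{0::real..} = {0..1} \<union> {1..}"
    by auto
  ultimately show ?thesis
    by (rule integrable_Un'[OF head tail])
qed

lemma has_integral_powr_mult_exp:
  assumes "(r::real) > 0" "(s::real) \<ge> 0"
  shows "((\<lambda>x. x powr s * exp (- r * x)) has_integral Gamma (s + 1) / r powr (s + 1)) {0..}"
proof -
  define f where "f = (\<lambda>t::real. t powr s / exp t)"
  have f_int: "(f has_integral Gamma (s + 1)) {0..}"
    using Gamma_integral_real[of "s + 1"] assms by (simp add: f_def)
  then have "f absolutely_integrable_on {0..}"
    by (intro nonnegative_absolutely_integrable_1) (auto simp: f_def integrable_on_def)
  moreover have "(\<lambda>x. r * x) ` {0..} = {0..}"
    using assms by (auto simp: image_iff intro!: bexI[of _ "x / r" for x])
  ultimately have "(\<lambda>x. \<bar>r\<bar> * f (r * x)) absolutely_integrable_on {0..} \<and>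
                   integral {0..} (\<lambda>x. \<bar>r\<bar> * f (r * x)) = Gamma (s + 1)"
    using assms f_int
    by (subst has_absolute_integral_change_of_variables_1'[where g="\<lambda>x. r * x" and g'="\<lambda>_. r"])
       (auto intro!: derivative_eq_intros inj_onI simp: integral_unique)
  then have "((\<lambda>x. r * f (r * x)) has_integral Gamma (s + 1)) {0..}"
    using assms set_lebesgue_integral_eq_integral(1) absolutely_integrable_on_def has_integral_integral
    by (metis abs_of_pos)
  then have "((\<lambda>x. (r * f (r * x)) / r powr (s + 1)) has_integral Gamma (s + 1) / r powr (s + 1)) {0..}"
    by (rule has_integral_divide)
  then show ?thesis
  proof (rule has_integral_eq[rotated])
    fix x :: real assume "x \<in> {0..}"
    then have "r * f (r * x) = r powr (s + 1) * (x powr s * exp (- r * x))"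
      using assms by (simp add: f_def powr_mult powr_add exp_minus divide_inverse mult_ac)
    then show "(r * f (r * x)) / r powr (s + 1) = x powr s * exp (- r * x)"
      using assms by simp
  qed
qed

subsection \<open>Termwise integration of an exponential series\<close>

lemma powr_le_one_plus:
  assumes "(y::real) \<ge> 0" "0 \<le> a" "a \<le> 1"
  shows "y powr a \<le> 1 + y"
proof (cases "y \<le> 1")
  case True
  then show ?thesis using assms powr_le1[of a y] by simp
next
  case False
  then have "y powr a \<le> y powr 1" using assms by (intro powr_mono) auto
  then show ?thesis using False by simp
qed

lemma powr_le_affine:
  assumes "0 \<le> a" "a < 1" "(e::real) > 0" "c > 0"
  obtains C where "\<And>b. b \<ge> 0 \<Longrightarrow> e * b powr a \<le> C + c * b"
proof
  define s where "s = (c / e) powr (1 / (1 - a))"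
  have "s > 0" using assms by (simp add: s_def)
  have "s powr (1 - a) = c / e"
    using assms by (simp add: s_def powr_powr)
  fix b :: real assume "b \<ge> 0"
  have "b powr a = s powr (- a) * (s * b) powr a"
    using \<open>s > 0\<close> \<open>b \<ge> 0\<close> by (simp add: powr_mult powr_minus)
  also have "\<dots> \<le> s powr (- a) * (1 + s * b)"
    using \<open>s > 0\<close> \<open>b \<ge> 0\<close> assms by (intro mult_left_mono powr_le_one_plus) auto
  finally have "b powr a \<le> s powr (- a) * (1 + s * b)" .
  then have "e * b powr a \<le> e * (s powr (- a) * (1 + s * b))"
    using assms by (intro mult_left_mono) auto
  also have "\<dots> = e * s powr (- a) + e * (s powr (- a) * s) * b"
    by (simp add: algebra_simps)
  also have "s powr (- a) * s = s powr (1 - a)"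
    using \<open>s > 0\<close> by (simp add: powr_diff powr_minus field_simps)
  finally show "e * b powr a \<le> e * s powr (- a) + c * b"
    using \<open>s powr (1 - a) = c / e\<close> assms by simp
qed

lemma norm_exp_partial_sum_le:
  fixes z :: "'a::{real_normed_algebra_1, banach}"
  shows "norm (\<Sum>k<N. z ^ k /\<^sub>R fact k) \<le> exp (norm z)"
proof -
  have "norm (\<Sum>k<N. z ^ k /\<^sub>R fact k) \<le> (\<Sum>k<N. norm z ^ k /\<^sub>R fact k)"
    by (rule order.trans[OF norm_sum]) (simp add: norm_power_ineq mult_left_mono sum_mono)
  also have "\<dots> \<le> (\<Sum>k. norm z ^ k /\<^sub>R fact k)"
    using exp_converges[of "norm z"] by (intro sum_le_suminf) (auto simp: sums_iff)
  also have "\<dots> = exp (norm z)"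
    using exp_converges[of "norm z"] by (simp add: sums_iff)
  finally show ?thesis .
qed

lemma has_integral_powr_power_mult_exp:
  fixes a r :: real and k :: nat
  assumes "r > 0" "a \<ge> 0"
  shows "((\<lambda>b. (b powr a) ^ k * exp (- r * b)) has_integral Gamma (a * k + 1) / r powr (a * k + 1)) {0..}"
proof -
  have "((\<lambda>b. b powr (a * k) * exp (- r * b)) has_integral Gamma (a * k + 1) / r powr (a * k + 1)) {0..}"
    using has_integral_powr_mult_exp[of r "a * k"] assms by simp
  then show ?thesis
    by (rule has_integral_spike[of "{0}", rotated 2]) (auto simp: powr_power mult.commute)
qed

lemma exp_powr_mult_exp_le:
  fixes a e r :: real
  assumes "0 \<le> a" "a < 1" "e > 0" "r > 0"
  obtains C where "\<And>b. b \<ge> 0 \<Longrightarrow> exp (e * b powr a) * exp (- r * b) \<le> C * exp (- (r / 2) * b)"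
proof -
  obtain C where C: "\<And>b. b \<ge> 0 \<Longrightarrow> e * b powr a \<le> C + r / 2 * b"
    using powr_le_affine[OF assms(1-3), of "r / 2"] assms(4) by auto
  have "exp (e * b powr a) * exp (- r * b) \<le> exp C * exp (- (r / 2) * b)" if "b \<ge> 0" for b
    using C[OF that] by (simp flip: exp_add)
  then show ?thesis
    by (rule that)
qed

lemma has_integral_exp_partial_sum_mult_exp:
  fixes a r :: real and c :: complex
  assumes "r > 0" "a \<ge> 0"
  shows "((\<lambda>b. (\<Sum>k<N. (c * of_real (b powr a)) ^ k /\<^sub>R fact k) * exp (- of_real r * of_real b))
           has_integral (\<Sum>k<N. c ^ k * of_real (Gamma (a * k + 1) / fact k * r powr - (a * k + 1)))) {0..}"
proof -
  have "((\<lambda>b. c ^ k * of_real ((b powr a) ^ k * exp (- r * b) / fact k))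
          has_integral c ^ k * of_real (Gamma (a * k + 1) / fact k * r powr - (a * k + 1))) {0..}" for k
    using has_integral_mult_right[OF has_integral_of_real[OF has_integral_divide[OF
            has_integral_powr_power_mult_exp[of r a k]]], of "c ^ k" "fact k"] assms
    unfolding powr_minus_divide by (simp add: field_simps)
  then have "((\<lambda>b. \<Sum>k<N. c ^ k * of_real ((b powr a) ^ k * exp (- r * b) / fact k))
               has_integral (\<Sum>k<N. c ^ k * of_real (Gamma (a * k + 1) / fact k * r powr - (a * k + 1)))) {0..}"
    by (intro has_integral_sum) auto
  then show ?thesis
  proof (rule has_integral_eq[rotated])
    fix b :: real assume "b \<in> {0..}"
    have "(c * of_real (b powr a)) ^ k /\<^sub>R fact k * exp (- of_real r * of_real b)
            = c ^ k * of_real ((b powr a) ^ k * exp (- r * b) / fact k)" for k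
      by (simp add: power_mult_distrib scaleR_conv_of_real exp_of_real[symmetric] divide_inverse mult_ac)
    then show "(\<Sum>k<N. c ^ k * of_real ((b powr a) ^ k * exp (- r * b) / fact k))
                 = (\<Sum>k<N. (c * of_real (b powr a)) ^ k /\<^sub>R fact k) * exp (- of_real r * of_real b)"
      by (simp add: sum_distrib_right)
  qed
qed

text \<open>The partial sums are dominated by \<open>exp (e b\<^sup>a - r b)\<close>, which is integrable
  precisely because \<open>a < 1\<close>.\<close>
lemma sums_integral_exp_powr:
  fixes a e r :: real and q :: complex
  assumes a: "0 < a" "a < 1" and "e > 0" "r > 0" "norm q \<le> 1"
  shows "(\<lambda>k. (- (of_real e * q)) ^ k * of_real (Gamma (a * k + 1) / fact k * r powr - (a * k + 1)))
           sums integral {0..} (\<lambda>b. exp (- of_real r * of_real b) * exp (- of_real (e * b powr a) * q))"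
proof -
  define c where "c = - (of_real e * q)"
  define f where "f N b = (\<Sum>k<N. (c * of_real (b powr a)) ^ k /\<^sub>R fact k) * exp (- of_real r * of_real b)"
    for N b
  note f_int = has_integral_exp_partial_sum_mult_exp[of r a c, folded f_def]
  obtain C where C: "\<And>b. b \<ge> 0 \<Longrightarrow> exp (e * b powr a) * exp (- r * b) \<le> C * exp (- (r / 2) * b)"
    using exp_powr_mult_exp_le[of a e r] assms by auto
  have f_bound: "norm (f N b) \<le> C * exp (- (r / 2) * b)" if "b \<in> {0..}" for N b
  proof -
    have "norm (c * of_real (b powr a)) \<le> e * b powr a"
      using that assms by (simp add: c_def norm_mult mult_left_le_one_le)
    then have "exp (norm (c * of_real (b powr a))) \<le> exp (e * b powr a)"
      by simp
    with norm_exp_partial_sum_le[where N=N and z="c * of_real (b powr a)"]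
    have "norm (\<Sum>k<N. (c * of_real (b powr a)) ^ k /\<^sub>R fact k) \<le> exp (e * b powr a)"
      by (rule order_trans)
    then have "norm (f N b) \<le> exp (e * b powr a) * exp (- r * b)"
      unfolding f_def norm_mult by (intro mult_mono) (auto simp: norm_exp_eq_Re)
    with C[of b] that show ?thesis
      by simp
  qed
  have "(\<lambda>b. exp (- (r / 2) * b)) integrable_on {0..}"
    using integrable_on_exp_minus_to_infinity[of "r / 2" 0] assms by simp
  from integrable_cmul[OF this, of C]
  have "(\<lambda>b. C * exp (- (r / 2) * b)) integrable_on {0..}"
    by simp
  moreover have "(\<lambda>N. f N b) \<longlonglongrightarrow> exp (c * of_real (b powr a)) * exp (- of_real r * of_real b)" for b
    unfolding f_def using exp_converges[of "c * of_real (b powr a)"]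
    by (intro tendsto_mult_right) (simp add: sums_def)
  ultimately have "(\<lambda>N. integral {0..} (f N))
      \<longlonglongrightarrow> integral {0..} (\<lambda>b. exp (c * of_real (b powr a)) * exp (- of_real r * of_real b))"
    using f_int f_bound assms by (intro dominated_convergence(2)) (auto simp: integrable_on_def)
  moreover have "(\<lambda>b. exp (c * of_real (b powr a)) * exp (- of_real r * of_real b))
                = (\<lambda>b. exp (- of_real r * of_real b) * exp (- of_real (e * b powr a) * q))"
    by (simp add: c_def fun_eq_iff mult_ac)
  ultimately show ?thesis
    using integral_unique[OF f_int] assms unfolding c_def by (simp add: sums_def)
qed

subsection \<open>The Laplace transform of a stable characteristic function\<close>

definition stable_rotation :: "real \<Rightarrow> complex" where
  "stable_rotation a = exp (- \<i> * of_real (pi * a / 2))"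

definition stable_charfun :: "real \<Rightarrow> real \<Rightarrow> real \<Rightarrow> complex" where
  "stable_charfun a e b = exp (- of_real (e * b powr a) * stable_rotation a)"

definition stable_laplace :: "real \<Rightarrow> real \<Rightarrow> complex \<Rightarrow> complex" where
  "stable_laplace a e z = integral {0..} (\<lambda>b. exp (- z * of_real b) * stable_charfun a e b)"

definition stable_laplace_upto :: "real \<Rightarrow> real \<Rightarrow> nat \<Rightarrow> complex \<Rightarrow> complex" where
  "stable_laplace_upto a e n z = integral {0..real n} (\<lambda>b. exp (- z * of_real b) * stable_charfun a e b)"

definition stable_coeff :: "real \<Rightarrow> real \<Rightarrow> nat \<Rightarrow> complex" where
  "stable_coeff a e k = (- (of_real e * stable_rotation a)) ^ k * of_real (Gamma (a * k + 1) / fact k)"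

definition stable_laplace_series :: "real \<Rightarrow> real \<Rightarrow> complex \<Rightarrow> complex" where
  "stable_laplace_series a e z = (\<Sum>k. stable_coeff a e k * z powr - of_real (a * k + 1))"

lemma norm_stable_rotation [simp]: "norm (stable_rotation a) = 1"
  by (simp add: stable_rotation_def norm_exp_eq_Re)

lemma norm_stable_charfun: "norm (stable_charfun a e b) = exp (- e * cos (pi * a / 2) * b powr a)"
  by (simp add: stable_charfun_def stable_rotation_def norm_exp_eq_Re Re_exp)

lemma continuous_on_stable_charfun: "a > 0 \<Longrightarrow> continuous_on {0..} (stable_charfun a e)"
  unfolding stable_charfun_def by (intro continuous_intros continuous_on_powr') auto

lemma holomorphic_stable_laplace_upto:
  assumes "a > 0"
  shows "stable_laplace_upto a e n holomorphic_on UNIV"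
proof -
  have "(\<lambda>z. integral (cbox 0 (real n)) (\<lambda>b. exp (- z * of_real b) * stable_charfun a e b))
          holomorphic_on UNIV"
  proof (rule leibniz_rule_holomorphic[where fx="\<lambda>z b. - of_real b * exp (- z * of_real b) * stable_charfun a e b"])
    fix z :: complex and b :: real
    show "((\<lambda>z. exp (- z * of_real b) * stable_charfun a e b) has_field_derivative
            - of_real b * exp (- z * of_real b) * stable_charfun a e b) (at z within UNIV)"
      by (auto intro!: derivative_eq_intros)
  next
    fix z :: complex
    have "continuous_on (cbox 0 (real n)) (stable_charfun a e)"
      by (rule continuous_on_subset[OF continuous_on_stable_charfun[OF assms]]) auto
    then show "(\<lambda>b. exp (- z * of_real b) * stable_charfun a e b) integrable_on cbox 0 (real n)"
      by (intro integrable_continuous continuous_intros)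
  next
    show "continuous_on (UNIV \<times> cbox 0 (real n))
           (\<lambda>(z, b). - of_real b * exp (- z * of_real b) * stable_charfun a e b)"
      unfolding stable_charfun_def split_beta using assms
      by (intro continuous_intros continuous_on_powr') auto
  qed auto
  then show ?thesis
    unfolding stable_laplace_upto_def by simp
qed

lemma one_islimpt_of_real_pos: "1 islimpt (complex_of_real ` {0<..})"
  unfolding islimpt_sequential
proof (intro exI conjI allI)
  fix n
  show "complex_of_real (1 + inverse (Suc n)) \<in> of_real ` {0<..} - {1}"
  proof (rule DiffI[OF imageI])
    show "1 + inverse (real (Suc n)) \<in> {0<..}"
      by (simp add: add_pos_pos)
    show "complex_of_real (1 + inverse (Suc n)) \<notin> {1}"
      by (simp del: of_real_add of_real_inverse)
  qed
next
  show "(\<lambda>n. complex_of_real (1 + inverse (Suc n))) \<longlonglongrightarrow> 1"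
    using tendsto_of_real[OF LIMSEQ_inverse_real_of_nat_add[of 1]] by (simp only: of_real_1)
qed

lemma Re_ge_of_mem_cball: "w \<in> cball z r \<Longrightarrow> Re z - r \<le> Re w"
  using abs_Re_le_cmod[of "z - w"] by (auto simp: dist_norm)

context
  fixes a e :: real
  assumes a: "0 < a" "a < 1" and e: "0 < e"
begin

definition stable_envelope :: "real \<Rightarrow> real" where
  "stable_envelope b = exp (- (e * cos (pi * a / 2)) * b powr a)"

lemma stable_envelope_integrable: "stable_envelope integrable_on {0..}"
proof -
  have "cos (pi * a / 2) > 0"
    using a by (intro cos_gt_zero) (auto simp: field_simps)
  then show ?thesis
    unfolding stable_envelope_def using e a by (intro exp_neg_powr_integrable) auto
qed

lemma norm_stable_laplace_integrand_le:
  assumes "Re z \<ge> 0" "b \<ge> 0"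
  shows "norm (exp (- z * of_real b) * stable_charfun a e b) \<le> stable_envelope b"
proof -
  have "norm (exp (- z * of_real b)) \<le> 1"
    using assms by (simp add: norm_exp_eq_Re)
  then show ?thesis
    by (simp add: norm_mult norm_stable_charfun stable_envelope_def mult_left_le_one_le)
qed

lemma stable_laplace_integrand_integrable:
  assumes "Re z \<ge> 0"
  shows "(\<lambda>b. exp (- z * of_real b) * stable_charfun a e b) integrable_on {0..}"
  using assms continuous_on_stable_charfun[OF a(1)]
  by (intro integrable_on_continuous_dominated[OF _ _ stable_envelope_integrable
        norm_stable_laplace_integrand_le] continuous_intros) auto

lemma uniform_limit_stable_laplace_upto:
  "uniform_limit {z. Re z \<ge> 0} (stable_laplace_upto a e) (stable_laplace a e) sequentially"
proof (rule uniform_limitI)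
  fix \<epsilon> :: real assume "\<epsilon> > 0"
  with tendsto_integral_atLeastAtMost_nat[OF stable_envelope_integrable]
  have "\<forall>\<^sub>F n in sequentially.
          dist (integral {0..real n} stable_envelope) (integral {0..} stable_envelope) < \<epsilon>"
    by (rule tendstoD)
  then show "\<forall>\<^sub>F n in sequentially. \<forall>z\<in>{z. Re z \<ge> 0}.
               dist (stable_laplace_upto a e n z) (stable_laplace a e z) < \<epsilon>"
  proof eventually_elim
    case (elim n)
    show ?case
    proof
      fix z assume "z \<in> {z. Re z \<ge> 0}"
      then have "dist (stable_laplace_upto a e n z) (stable_laplace a e z)
                   \<le> integral {0..} stable_envelope - integral {0..real n} stable_envelope"
        unfolding stable_laplace_upto_def stable_laplace_def dist_norm norm_minus_commute[of "integral {0..real n} _"]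
        by (intro norm_integral_tail_le stable_laplace_integrand_integrable stable_envelope_integrable
              norm_stable_laplace_integrand_le) auto
      with elim show "dist (stable_laplace_upto a e n z) (stable_laplace a e z) < \<epsilon>"
        by (simp add: dist_real_def)
    qed
  qed
qed

lemma continuous_on_stable_laplace: "continuous_on {z. Re z \<ge> 0} (stable_laplace a e)"
  by (rule uniform_limit_theorem[OF _ uniform_limit_stable_laplace_upto])
     (auto intro!: always_eventually holomorphic_on_imp_continuous_on
        holomorphic_on_subset[OF holomorphic_stable_laplace_upto[OF a(1)]])

lemma holomorphic_stable_laplace: "stable_laplace a e holomorphic_on {z. Re z > 0}"
proof (rule holomorphic_uniform_sequence[OF open_halfspace_Re_gt])
  show "stable_laplace_upto a e n holomorphic_on {z. Re z > 0}" for n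
    by (rule holomorphic_on_subset[OF holomorphic_stable_laplace_upto[OF a(1)]]) auto
next
  fix z :: complex assume "z \<in> {z. Re z > 0}"
  then have "cball z (Re z / 2) \<subseteq> {w. Re w > 0}" and "cball z (Re z / 2) \<subseteq> {w. Re w \<ge> 0}"
    using Re_ge_of_mem_cball[of _ z "Re z / 2"] by fastforce+
  with \<open>z \<in> _\<close> show "\<exists>d>0. cball z d \<subseteq> {z. Re z > 0} \<and>
      uniform_limit (cball z d) (stable_laplace_upto a e) (stable_laplace a e) sequentially"
    by (intro exI[of _ "Re z / 2"] conjI uniform_limit_on_subset[OF uniform_limit_stable_laplace_upto]) auto
qed

lemma Gamma_linear_pos: "Gamma (a * real k + 1) > 0"
  using a by (intro Gamma_real_pos) (simp add: add_nonneg_pos)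

lemma sums_stable_laplace_of_real:
  assumes "r > 0"
  shows "(\<lambda>k. stable_coeff a e k * of_real r powr - of_real (a * k + 1)) sums stable_laplace a e (of_real r)"
  using sums_integral_exp_powr[OF a e assms, of "stable_rotation a"] assms
  by (simp add: stable_coeff_def stable_laplace_def stable_charfun_def powr_of_real[symmetric] mult.assoc)

lemma summable_stable_majorant:
  assumes "d > 0"
  shows "summable (\<lambda>k. e ^ k * (Gamma (a * k + 1) / fact k) * d powr - (a * k + 1))"
proof -
  have norm1: "norm (-1 :: complex) \<le> 1"
    by simp
  have "(\<lambda>k. (- (of_real e * -1)) ^ k * of_real (Gamma (a * k + 1) / fact k * d powr - (a * k + 1)))
          = (\<lambda>k. complex_of_real (e ^ k * (Gamma (a * k + 1) / fact k) * d powr - (a * k + 1)))"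
    by (simp add: fun_eq_iff)
  with sums_summable[OF sums_integral_exp_powr[OF a e assms norm1]]
  have "summable (\<lambda>k. complex_of_real (e ^ k * (Gamma (a * k + 1) / fact k) * d powr - (a * k + 1)))"
    by (simp only:)
  then show ?thesis
    by (simp only: summable_complex_of_real)
qed

lemma norm_stable_series_term:
  assumes "z \<noteq> 0"
  shows "norm (stable_coeff a e k * z powr - of_real (a * k + 1))
           = e ^ k * (Gamma (a * k + 1) / fact k) * norm z powr - (a * k + 1)"
  using e Gamma_linear_pos[of k]
  by (simp add: stable_coeff_def norm_mult norm_power norm_divide norm_powr_real_powr')

lemma uniform_limit_stable_laplace_series:
  assumes "d > 0"
  shows "uniform_limit {z. 0 \<le> Re z \<and> d \<le> norm z}
           (\<lambda>n z. \<Sum>k<n. stable_coeff a e k * z powr - of_real (a * k + 1)) (stable_laplace_series a e) sequentially"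
  unfolding stable_laplace_series_def
proof (rule Weierstrass_m_test[OF _ summable_stable_majorant[OF assms]])
  fix k :: nat and z assume "z \<in> {z. 0 \<le> Re z \<and> d \<le> norm z}"
  then have "d \<le> norm z" "z \<noteq> 0" using assms by auto
  then have "norm z powr - (a * k + 1) \<le> d powr - (a * k + 1)"
    using assms a by (intro powr_mono2') (auto intro: order_trans[of _ 0])
  then show "norm (stable_coeff a e k * z powr - of_real (a * k + 1))
               \<le> e ^ k * (Gamma (a * k + 1) / fact k) * d powr - (a * k + 1)"
    unfolding norm_stable_series_term[OF \<open>z \<noteq> 0\<close>] using e Gamma_linear_pos[of k]
    by (intro mult_left_mono) auto
qed

lemma continuous_on_stable_laplace_series:
  assumes "d > 0"
  shows "continuous_on {z. 0 \<le> Re z \<and> d \<le> norm z} (stable_laplace_series a e)"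
proof (rule uniform_limit_theorem[OF _ uniform_limit_stable_laplace_series[OF assms]])
  have "continuous_on {z. 0 \<le> Re z \<and> d \<le> norm z} (\<lambda>z. \<Sum>k<n. stable_coeff a e k * z powr - of_real (a * k + 1))"
    for n
    using assms by (intro continuous_intros continuous_on_powr_complex) auto
  then show "\<forall>\<^sub>F n in sequentially. continuous_on {z. 0 \<le> Re z \<and> d \<le> norm z}
               (\<lambda>z. \<Sum>k<n. stable_coeff a e k * z powr - of_real (a * k + 1))"
    by simp
qed simp

lemma holomorphic_stable_laplace_series: "stable_laplace_series a e holomorphic_on {z. Re z > 0}"
proof (rule holomorphic_uniform_sequence[OF open_halfspace_Re_gt])
  fix n
  show "(\<lambda>z. \<Sum>k<n. stable_coeff a e k * z powr - of_real (a * k + 1)) holomorphic_on {z. Re z > 0}"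
    by (intro holomorphic_intros) (auto simp: nonpos_Reals_def)
next
  fix z :: complex assume "z \<in> {z. Re z > 0}"
  have half: "Re z / 2 \<le> Re w" if "w \<in> cball z (Re z / 2)" for w
    using Re_ge_of_mem_cball[OF that] by simp
  have "cball z (Re z / 2) \<subseteq> {w. 0 \<le> Re w \<and> Re z / 2 \<le> norm w}"
  proof
    fix w assume "w \<in> cball z (Re z / 2)"
    then show "w \<in> {w. 0 \<le> Re w \<and> Re z / 2 \<le> norm w}"
      using half[of w] complex_Re_le_cmod[of w] \<open>z \<in> _\<close> by auto
  qed
  moreover have "cball z (Re z / 2) \<subseteq> {w. Re w > 0}"
    using half \<open>z \<in> _\<close> by fastforce
  ultimately show "\<exists>d>0. cball z d \<subseteq> {z. Re z > 0} \<and> uniform_limit (cball z d)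
        (\<lambda>n z. \<Sum>k<n. stable_coeff a e k * z powr - of_real (a * k + 1)) (stable_laplace_series a e) sequentially"
    using \<open>z \<in> _\<close>
    by (intro exI[of _ "Re z / 2"] conjI uniform_limit_on_subset[OF uniform_limit_stable_laplace_series[of "Re z / 2"]]) auto
qed

lemma stable_laplace_eq_series:
  assumes "Re z > 0"
  shows "stable_laplace a e z = stable_laplace_series a e z"
proof -
  have zero: "stable_laplace a e w - stable_laplace_series a e w = 0" if "w \<in> of_real ` {0<..}" for w
    using that sums_unique[OF sums_stable_laplace_of_real] by (auto simp: stable_laplace_series_def)
  have "(\<lambda>w. stable_laplace a e w - stable_laplace_series a e w) holomorphic_on {w. Re w > 0}"
    by (intro holomorphic_intros holomorphic_stable_laplace holomorphic_stable_laplace_series)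
  from analytic_continuation[OF this open_halfspace_Re_gt convex_connected[OF convex_halfspace_Re_gt]
         _ _ one_islimpt_of_real_pos zero]
  have "stable_laplace a e z - stable_laplace_series a e z = 0"
    using assms by force
  then show ?thesis
    by simp
qed

lemma stable_laplace_imaginary_eq_series:
  assumes "y > 0"
  shows "stable_laplace a e (\<i> * of_real y) = stable_laplace_series a e (\<i> * of_real y)"
proof -
  define w where "w = (\<lambda>n. of_real (inverse (Suc n)) + \<i> * of_real y)"
  have w_lim: "w \<longlonglongrightarrow> \<i> * of_real y"
    unfolding w_def using tendsto_add[OF tendsto_of_real[OF LIMSEQ_inverse_real_of_nat] tendsto_const]
    by (simp only: of_real_0 add_0_left)
  have w_in: "w n \<in> {z. 0 \<le> Re z \<and> y \<le> norm z}" for n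
    using abs_Im_le_cmod[of "w n"] assms by (simp add: w_def)
  have "(\<lambda>n. stable_laplace a e (w n)) \<longlonglongrightarrow> stable_laplace a e (\<i> * of_real y)"
    by (rule continuous_on_tendsto_compose[OF continuous_on_stable_laplace w_lim])
       (auto simp: w_def)
  moreover have "stable_laplace a e (w n) = stable_laplace_series a e (w n)" for n
    by (rule stable_laplace_eq_series) (simp add: w_def)
  ultimately have "(\<lambda>n. stable_laplace_series a e (w n)) \<longlonglongrightarrow> stable_laplace a e (\<i> * of_real y)"
    by simp
  moreover have "(\<lambda>n. stable_laplace_series a e (w n)) \<longlonglongrightarrow> stable_laplace_series a e (\<i> * of_real y)"
    using assms w_in
    by (intro continuous_on_tendsto_compose[OF continuous_on_stable_laplace_series[OF assms] w_lim])
       (auto simp: norm_mult)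
  ultimately show ?thesis
    by (rule LIMSEQ_unique)
qed

end

subsection \<open>Stable densities and the Mainardi function\<close>

definition mainardi_M :: "real \<Rightarrow> real \<Rightarrow> real" where
  "mainardi_M a z = (\<Sum>j. (- z) ^ j / fact j * rGamma (1 - a - a * j))"

lemma Gamma_plus1_mult_sin:
  assumes "(s::real) > 0"
  shows "Gamma (s + 1) * sin (pi * s) / pi = s * rGamma (1 - s)"
proof -
  have "complex_of_real (rGamma s * rGamma (1 - s)) = complex_of_real (sin (pi * s) / pi)"
    using rGamma_reflection_complex[of "complex_of_real s"]
    by (simp add: rGamma_complex_of_real[symmetric] sin_of_real[symmetric])
  then have refl: "rGamma s * rGamma (1 - s) = sin (pi * s) / pi"
    by (simp only: of_real_eq_iff)
  have "s \<notin> \<int>\<^sub>\<le>\<^sub>0"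
    using assms nonpos_Ints_nonpos by fastforce
  then have "Gamma (s + 1) * rGamma s = s"
    using Gamma_plus1[of s] by (simp add: rGamma_eq_zero_iff Gamma_def)
  then have "Gamma (s + 1) * (rGamma s * rGamma (1 - s)) = s * rGamma (1 - s)"
    by (metis mult.assoc)
  then show ?thesis
    by (simp add: refl)
qed

lemma powr_imaginary:
  assumes "y > 0"
  shows "(\<i> * of_real y) powr of_real s = of_real (y powr s) * exp (\<i> * of_real (pi * s / 2))"
proof -
  have "Ln (\<i> * of_real y) = of_real (ln y) + \<i> * of_real (pi / 2)"
    using Ln_times_ii[of "of_real y"] assms by (simp add: Ln_of_real)
  then show ?thesis
    using assms by (simp add: powr_def exp_add exp_of_real[symmetric] algebra_simps)
qed

lemma stable_rotation_power: "stable_rotation a ^ k = exp (- \<i> * of_real (pi * a * k / 2))"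
  unfolding stable_rotation_def exp_of_nat_mult[symmetric] by (simp add: algebra_simps)

lemma Re_of_real_mult_exp_mult_exp:
  "Re (of_real c * exp (\<i> * of_real \<alpha>) * exp (\<i> * of_real \<beta>)) = c * cos (\<alpha> + \<beta>)"
  by (simp add: Re_exp Im_exp cos_add algebra_simps)

lemma Re_stable_series_term_imaginary:
  assumes "y > 0"
  shows "Re (stable_coeff a e k * (\<i> * of_real y) powr - of_real (a * k + 1))
           = - ((- e) ^ k * (Gamma (a * k + 1) / fact k) * y powr - (a * k + 1) * sin (pi * a * k))"
proof -
  have "stable_coeff a e k = (of_real (- e) * stable_rotation a) ^ k * of_real (Gamma (a * k + 1) / fact k)"
    by (simp only: stable_coeff_def of_real_minus mult_minus_left)
  also have "\<dots> = of_real ((- e) ^ k * (Gamma (a * k + 1) / fact k)) * exp (\<i> * of_real (- (pi * a * k / 2)))"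
    unfolding power_mult_distrib stable_rotation_power by (simp add: mult_ac)
  finally have "stable_coeff a e k * (\<i> * of_real y) powr - of_real (a * k + 1)
          = of_real ((- e) ^ k * (Gamma (a * k + 1) / fact k))
            * exp (\<i> * of_real (- (pi * a * k / 2))) * (\<i> * of_real y) powr of_real (- (a * k + 1))"
    by simp
  also have "\<dots> = of_real ((- e) ^ k * (Gamma (a * k + 1) / fact k) * y powr - (a * k + 1))
            * exp (\<i> * of_real (- (pi * a * k / 2))) * exp (\<i> * of_real (pi * - (a * k + 1) / 2))"
    unfolding powr_imaginary[OF assms] by (simp add: mult_ac)
  finally have "stable_coeff a e k * (\<i> * of_real y) powr - of_real (a * k + 1)
          = of_real ((- e) ^ k * (Gamma (a * k + 1) / fact k) * y powr - (a * k + 1))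
            * exp (\<i> * of_real (- (pi * a * k / 2))) * exp (\<i> * of_real (pi * - (a * k + 1) / 2))" .
  moreover have "cos (- (pi * a * k / 2) + pi * - (a * k + 1) / 2) = - sin (pi * a * k)"
  proof -
    have "- (pi * a * k / 2) + pi * - (a * k + 1) / 2 = - (pi * a * k + pi / 2)"
      by (simp add: field_simps)
    then show ?thesis
      by (simp only: cos_minus cos_add cos_pi_half sin_pi_half)
  qed
  ultimately show ?thesis
    by (simp only: Re_of_real_mult_exp_mult_exp)
qed

lemma stable_series_term_reflection:
  fixes a e y :: real
  assumes "a > 0" "y > 0"
  shows "- ((- e) ^ Suc j * (Gamma (a * Suc j + 1) / fact (Suc j)) * y powr - (a * Suc j + 1)
             * sin (pi * a * Suc j)) / pi
         = a * (e * y powr - a) / y * ((- (e * y powr - a)) ^ j / fact j * rGamma (1 - a - a * j))"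
proof -
  define s where "s = a * Suc j"
  have "s > 0"
    using assms by (simp add: s_def)
  have "(y powr - a) ^ Suc j = y powr (real (Suc j) * - a)"
    using assms by (intro powr_power) simp
  also have "real (Suc j) * - a = - s"
    by (simp add: s_def)
  finally have y_pow: "y powr - (s + 1) = (y powr - a) ^ Suc j / y"
    using assms by (simp add: powr_diff)
  have e_pow: "(- e) ^ Suc j = - ((- 1) ^ j * e ^ Suc j)"
    by (simp add: power_minus[of e])
  have sin_s: "sin (pi * a * Suc j) = sin (pi * s)"
    by (simp add: s_def mult.assoc)
  have "- ((- e) ^ Suc j * (Gamma (s + 1) / fact (Suc j)) * y powr - (s + 1) * sin (pi * a * Suc j)) / pi
        = (- 1) ^ j * e ^ Suc j * (Gamma (s + 1) * sin (pi * s) / pi) * ((y powr - a) ^ Suc j / y) / fact (Suc j)"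
    by (simp only: y_pow e_pow sin_s) (simp add: field_simps)
  also have "\<dots> = (- 1) ^ j * e ^ Suc j * (s * rGamma (1 - s)) * ((y powr - a) ^ Suc j / y) / (real (Suc j) * fact j)"
    by (simp only: Gamma_plus1_mult_sin[OF \<open>s > 0\<close>] fact_Suc)
  also have "\<dots> = s / real (Suc j) * (e * y powr - a) / y * ((- 1) ^ j * (e * y powr - a) ^ j / fact j * rGamma (1 - s))"
    by (simp add: power_mult_distrib field_simps)
  also have "s / real (Suc j) = a"
    by (simp add: s_def)
  also have "(- 1) ^ j * (e * y powr - a) ^ j = (- (e * y powr - a)) ^ j"
    by (rule power_minus[symmetric])
  also have "1 - s = 1 - a - a * j"
    by (simp add: s_def algebra_simps)
  finally show ?thesis
    by (simp only: s_def)
qed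

context
  fixes a e :: real
  assumes a: "0 < a" "a < 1" and e: "0 < e"
begin

lemma p_stable_eq_Re_stable_laplace:
  "p_stable a a e y = of_real (Re (stable_laplace a e (\<i> * of_real y)) / pi)"
proof -
  define F where "F = (\<lambda>b::real. exp (- \<i> * complex_of_real (b * y)) *
     exp (- complex_of_real (e * \<bar>b\<bar> powr a) * exp (- \<i> * complex_of_real (pi * a / 2 * sgn b))))"
  define g where "g = (\<lambda>b::real. exp (- (\<i> * of_real y) * of_real b) * stable_charfun a e b)"
  define P where "P = stable_laplace a e (\<i> * of_real y)"
  have g_int: "(g has_integral P) {0..}"
    using stable_laplace_integrand_integrable[OF a e, of "\<i> * of_real y"]
    by (simp add: g_def P_def stable_laplace_def has_integral_integral)
  have F_pos: "g b = F b" if "b \<ge> 0" for b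
    using that by (cases "b = 0") (auto simp: F_def g_def stable_charfun_def stable_rotation_def mult_ac)
  have F_neg: "cnj (g b) = F (- b)" if "b \<ge> 0" for b
    using that by (cases "b = 0") (auto simp: F_def g_def stable_charfun_def stable_rotation_def exp_cnj mult_ac)
  have "(F has_integral P) {0..}"
    by (rule has_integral_eq[OF _ g_int]) (simp add: F_pos)
  moreover have "(F has_integral cnj P) {..0}"
  proof -
    have "((\<lambda>b. cnj (g b)) has_integral cnj P) {0..}"
      using has_integral_cnj[of g P "{0..}"] g_int by (simp add: o_def)
    then have "((\<lambda>b. F (- b)) has_integral cnj P) {0..}"
      by (rule has_integral_eq[rotated]) (simp add: F_neg)
    moreover have "uminus ` {0..} = {..(0::real)}"
      by (auto simp: image_iff intro!: exI[of _ "- x" for x])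
    ultimately show ?thesis
      using has_integral_reflect_set[of "\<lambda>b. F (- b)" "cnj P" "{0..}"] by simp
  qed
  ultimately have "(F has_integral (cnj P + P)) ({..0} \<union> {0..})"
    by (intro has_integral_Un) (auto intro: negligible_subset[OF negligible_sing[of 0]])
  moreover have "{..0} \<union> {0..} = (UNIV :: real set)"
    by auto
  ultimately have "integral UNIV F = P + cnj P"
    by (simp add: integral_unique add.commute)
  then show ?thesis
    unfolding p_stable_def F_def[symmetric] P_def[symmetric] by (simp add: complex_add_cnj)
qed

lemma p_stable_eq_mainardi_M:
  assumes "y > 0"
  shows "p_stable a a e y = of_real (a * (e * y powr - a) / y * mainardi_M a (e * y powr - a))"
proof -
  define t where "t = (\<lambda>k. stable_coeff a e k * (\<i> * of_real y) powr - of_real (a * k + 1))"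
  define P where "P = stable_laplace a e (\<i> * of_real y)"
  define Z where "Z = e * y powr - a"
  have "norm (t k) \<le> e ^ k * (Gamma (a * k + 1) / fact k) * y powr - (a * k + 1)" for k
    unfolding t_def using assms by (subst norm_stable_series_term[OF a e]) (auto simp: norm_mult)
  then have "summable t"
    using summable_comparison_test'[OF summable_stable_majorant[OF a e assms], where N=0 and f=t] by blast
  then have "t sums P"
    using stable_laplace_imaginary_eq_series[OF a e assms]
    by (simp add: P_def t_def stable_laplace_series_def summable_sums)
  then have "(\<lambda>k. Re (t k) / pi) sums (Re P / pi)"
    by (intro sums_divide sums_Re)
  moreover have "Re (t 0) / pi = 0"
    using Re_stable_series_term_imaginary[OF assms, of a e 0] by (simp add: t_def)
  ultimately have "(\<lambda>j. Re (t (Suc j)) / pi) sums (Re P / pi)"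
    using sums_Suc_iff[of "\<lambda>k. Re (t k) / pi"] by simp
  then have "(\<lambda>j. a * Z / y * ((- Z) ^ j / fact j * rGamma (1 - a - a * j))) sums (Re P / pi)"
    by (simp only: t_def Z_def Re_stable_series_term_imaginary[OF assms]
          stable_series_term_reflection[OF a(1) assms])
  moreover have "a * Z / y \<noteq> 0"
    using a e assms by (simp add: Z_def)
  ultimately have "(\<lambda>j. (- Z) ^ j / fact j * rGamma (1 - a - a * j)) sums (Re P / pi / (a * Z / y))"
    by (rule sums_mult_D)
  then have "mainardi_M a Z = Re P / pi / (a * Z / y)"
    unfolding mainardi_M_def by (rule sums_unique[symmetric])
  with \<open>a * Z / y \<noteq> 0\<close> have "Re P / pi = a * Z / y * mainardi_M a Z"
    by simp
  then show ?thesis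
    by (simp add: p_stable_eq_Re_stable_laplace P_def Z_def)
qed

end

subsection \<open>The fundamental solution\<close>

lemma u_nu_eq_mainardi_M:
  "u_nu nu lam x t = 1 / (2 * (lam * t powr (nu / 2))) * mainardi_M (nu / 2) (\<bar>x\<bar> / (lam * t powr (nu / 2)))"
proof -
  have "- nu * real k / 2 + 1 - nu / 2 = 1 - nu / 2 - nu / 2 * k" for k
    by (simp add: field_simps)
  then show ?thesis
    unfolding u_nu_def mainardi_M_def minus_divide_left by (simp only:)
qed

lemma u_nu_eq_p_stable:
  fixes nu lam x t e y :: real
  assumes "0 < nu" "nu < 2" "lam > 0" "t > 0" "e > 0" "y > 0"
    and scale: "e * y powr - (nu / 2) = \<bar>x\<bar> / (lam * t powr (nu / 2))"
  shows "complex_of_real (u_nu nu lam x t) = complex_of_real (y / (nu * \<bar>x\<bar>)) * p_stable (nu / 2) (nu / 2) e y"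
proof -
  define D where "D = lam * t powr (nu / 2)"
  have "D > 0"
    using assms by (simp add: D_def)
  with scale have "x \<noteq> 0"
    using assms by (auto simp: D_def[symmetric])
  have p: "p_stable (nu / 2) (nu / 2) e y = of_real (nu / 2 * (\<bar>x\<bar> / D) / y * mainardi_M (nu / 2) (\<bar>x\<bar> / D))"
    using p_stable_eq_mainardi_M[of "nu / 2" e y] assms by (simp add: D_def)
  have "u_nu nu lam x t = 1 / (2 * D) * mainardi_M (nu / 2) (\<bar>x\<bar> / D)"
    by (simp add: u_nu_eq_mainardi_M D_def)
  also have "\<dots> = y / (nu * \<bar>x\<bar>) * (nu / 2 * (\<bar>x\<bar> / D) / y * mainardi_M (nu / 2) (\<bar>x\<bar> / D))"
    using \<open>D > 0\<close> \<open>x \<noteq> 0\<close> assms by (simp add: field_simps)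
  finally show ?thesis
    unfolding p by (simp only: of_real_mult)
qed

theorem theorem5p4:
  fixes lam nu x t :: real
  assumes "lam > 0" and "0 < nu" and "nu \<le> 1" and "x \<noteq> 0" and "t > 0"
  shows "complex_of_real (u_nu nu lam x t) =
           complex_of_real (1 / nu * lam powr (2/nu) * t / \<bar>x\<bar> powr (2/nu + 1)) *
           p_stable (nu/2) (nu/2) 1 (lam powr (2/nu) * t / \<bar>x\<bar> powr (2/nu))
       \<and> complex_of_real (u_nu nu lam x t) =
           complex_of_real (1 / (nu * \<bar>x\<bar> powr (2/nu + 1))) *
           p_stable (nu/2) (nu/2) (1 / (lam * t powr (nu/2))) (1 / \<bar>x\<bar> powr (2/nu))"
proof -
  have inverse_root: "(c powr (2 / nu)) powr - (nu / 2) = 1 / c" if "c > 0" for c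
    using that assms by (simp add: powr_powr powr_minus_divide)
  have x_powr: "\<bar>x\<bar> powr (2 / nu + 1) = \<bar>x\<bar> powr (2 / nu) * \<bar>x\<bar>"
    using assms by (simp add: powr_add)
  have "lam powr (2/nu) * t / \<bar>x\<bar> powr (2/nu) / (nu * \<bar>x\<bar>)
          = 1 / nu * lam powr (2/nu) * t / \<bar>x\<bar> powr (2/nu + 1)"
    and "1 / \<bar>x\<bar> powr (2/nu) / (nu * \<bar>x\<bar>) = 1 / (nu * \<bar>x\<bar> powr (2/nu + 1))"
    by (simp_all add: x_powr)
  moreover have "complex_of_real (u_nu nu lam x t) =
          complex_of_real (lam powr (2/nu) * t / \<bar>x\<bar> powr (2/nu) / (nu * \<bar>x\<bar>)) *
          p_stable (nu/2) (nu/2) 1 (lam powr (2/nu) * t / \<bar>x\<bar> powr (2/nu))"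
    using assms inverse_root[of lam] inverse_root[of "\<bar>x\<bar>"]
    by (intro u_nu_eq_p_stable) (simp_all add: powr_divide powr_mult powr_minus_divide)
  moreover have "complex_of_real (u_nu nu lam x t) =
          complex_of_real (1 / \<bar>x\<bar> powr (2/nu) / (nu * \<bar>x\<bar>)) *
          p_stable (nu/2) (nu/2) (1 / (lam * t powr (nu/2))) (1 / \<bar>x\<bar> powr (2/nu))"
    using assms inverse_root[of "\<bar>x\<bar>"]
    by (intro u_nu_eq_p_stable) (simp_all add: powr_divide)
  ultimately show ?thesis
    by (simp only:)
qed

end
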